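(* Let $\mathcal{F}$ be a feature. For every weighted graph $(G,f)$, the functions $\sigma^{\mathcal{F}}_{(G,f)}$ and $\varrho^{\mathcal{F}}_{(G,f)}$ are categorical persistence functions; that is, $\sigma^{\mathcal{F}}$ and $\varrho^{\mathcal{F}}$ are ip-function generators.
   Context: Graphs are finite simple undirected graphs $G=(V,E)$; a weighted graph is $(G,f)$ with $f:E\to\mathbb{R}$. For $u\in\mathbb{R}$, $G_u=(V_u,E_u)$ is the subgraph of $G$ induced by the edge set $f^{-1}((-\infty,u])$ (vertices: endpoints of these edges), and $G_{+\infty}=G$. $\Delta^+=\{(u,v)\in\mathbb{R}\times(\mathbb{R}\cup\{+\infty\}): u<v\}$. A feature $\mathcal{F}$ assigns to every graph $H=(V_H,E_H)$ (in particular to every subgraph $G_w$) a function $2^{V_H\cup E_H}\to\{true,false\}$; $X$ is an $\mathcal{F}$-set of $H$ if $\mathcal{F}(X)=true$ in $H$. $X\subseteq V\cup E$ is an $\mathcal{F}$-set at level $w$ if it is an $\mathcal{F}$-set of $G_w$. $X$ is a steady $\mathcal{F}$-set at $(u,v)\in\Delta^+$ if it is an $\mathcal{F}$-set at all levels $w$ with $u\le w\le v$; it is a ranging $\mathcal{F}$-set at $(u,v)$ if there exist levels $w\le u$ and $w'\ge v$ at which it is an $\mathcal{F}$-set. Let $S^{\mathcal{F}}_{(G,f)}(u,v)$ and $R^{\mathcal{F}}_{(G,f)}(u,v)$ be the sets of steady, resp. ranging, $\mathcal{F}$-sets at $(u,v)$, and $\sigma^{\mathcal{F}}_{(G,f)}(u,v)=|S^{\mathcal{F}}_{(G,f)}(u,v)|$,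 $\varrho^{\mathcal{F}}_{(G,f)}(u,v)=|R^{\mathcal{F}}_{(G,f)}(u,v)|$. A categorical persistence function is a lower-bounded $p:\Delta^+\to\mathbb{Z}$ such that for all $u_1\le u_2<v_1\le v_2$: (1) $p(u_1,v_1)\le p(u_2,v_1)$ and $p(u_2,v_2)\le p(u_2,v_1)$; (2) $p(u_2,v_1)-p(u_1,v_1)\ge p(u_2,v_2)-p(u_1,v_2)$. *)

theory Defs
  imports "HOL-Library.Extended_Real"
begin

definition simple_graph :: "'v set \<Rightarrow> 'v set set \<Rightarrow> bool" where
  "simple_graph V E \<longleftrightarrow> finite V \<and> (\<forall>e\<in>E. e \<subseteq> V \<and> card e = 2)"

definition elems :: "'v set \<Rightarrow> 'v set set \<Rightarrow> ('v + 'v set) set" where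
  "elems V E = Inl ` V \<union> Inr ` E"

type_synonym 'v feature = "'v set \<Rightarrow> 'v set set \<Rightarrow> ('v + 'v set) set \<Rightarrow> bool"

definition is_F_set :: "'v feature \<Rightarrow> 'v set \<Rightarrow> 'v set set \<Rightarrow> ('v + 'v set) set \<Rightarrow> bool" where
  "is_F_set F VH EH X \<longleftrightarrow> X \<subseteq> elems VH EH \<and> F VH EH X"

text \<open>Sublevel graph G_w for a level w in \<real> \<union> {+\<infinity>} (levels are ereal values \<noteq> -\<infinity>).\<close>
definition sub_edges :: "'v set set \<Rightarrow> ('v set \<Rightarrow> real) \<Rightarrow> ereal \<Rightarrow> 'v set set" where
  "sub_edges E f w = (if w = \<infinity> then E else {e\<in>E. ereal (f e) \<le> w})"

definition sub_verts :: "'v set \<Rightarrow> 'v set set \<Rightarrow> ('v set \<Rightarrow> real) \<Rightarrow> ereal \<Rightarrow> 'v set" where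
  "sub_verts V E f w = (if w = \<infinity> then V else \<Union> (sub_edges E f w))"

definition F_set_at_level :: "'v feature \<Rightarrow> 'v set \<Rightarrow> 'v set set \<Rightarrow> ('v set \<Rightarrow> real) \<Rightarrow> ereal \<Rightarrow> ('v + 'v set) set \<Rightarrow> bool" where
  "F_set_at_level F V E f w X \<longleftrightarrow> is_F_set F (sub_verts V E f w) (sub_edges E f w) X"

definition steady_sets :: "'v feature \<Rightarrow> 'v set \<Rightarrow> 'v set set \<Rightarrow> ('v set \<Rightarrow> real) \<Rightarrow> real \<Rightarrow> ereal \<Rightarrow> ('v + 'v set) set set" where
  "steady_sets F V E f u v = {X. \<forall>w::ereal. ereal u \<le> w \<and> w \<le> v \<longrightarrow> F_set_at_level F V E f w X}"

definition ranging_sets :: "'v feature \<Rightarrow> 'v set \<Rightarrow> 'v set set \<Rightarrow> ('v set \<Rightarrow> real) \<Rightarrow> real \<Rightarrow> ereal \<Rightarrow> ('v + 'v set) set set" where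
  "ranging_sets F V E f u v = {X. (\<exists>w::ereal. w \<noteq> -\<infinity> \<and> w \<le> ereal u \<and> F_set_at_level F V E f w X)
                                  \<and> (\<exists>w'::ereal. w' \<noteq> -\<infinity> \<and> v \<le> w' \<and> F_set_at_level F V E f w' X)}"

definition sigma :: "'v feature \<Rightarrow> 'v set \<Rightarrow> 'v set set \<Rightarrow> ('v set \<Rightarrow> real) \<Rightarrow> real \<Rightarrow> ereal \<Rightarrow> int" where
  "sigma F V E f u v = int (card (steady_sets F V E f u v))"

definition rho :: "'v feature \<Rightarrow> 'v set \<Rightarrow> 'v set set \<Rightarrow> ('v set \<Rightarrow> real) \<Rightarrow> real \<Rightarrow> ereal \<Rightarrow> int" where
  "rho F V E f u v = int (card (ranging_sets F V E f u v))"

text \<open>Categorical persistence function on \<Delta>+ = {(u,v). u real, v in \<real>\<union>{+\<infinity>}, u < v}.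
  Values of p outside \<Delta>+ (and at v = -\<infinity>) are irrelevant.\<close>
definition categorical_persistence_function :: "(real \<Rightarrow> ereal \<Rightarrow> int) \<Rightarrow> bool" where
  "categorical_persistence_function p \<longleftrightarrow>
     (\<exists>c. \<forall>u v. ereal u < v \<longrightarrow> c \<le> p u v) \<and>
     (\<forall>u1 u2 :: real. \<forall>v1 v2 :: ereal.
        u1 \<le> u2 \<and> ereal u2 < v1 \<and> v1 \<le> v2 \<longrightarrow>
          p u1 v1 \<le> p u2 v1 \<and> p u2 v2 \<le> p u2 v1 \<and>
          p u2 v1 - p u1 v1 \<ge> p u2 v2 - p u1 v2)"

end

theory Submission
  imports Defs
begin

text \<open>Both \<sigma> and \<rho> count a finite family P u v of sets that shrinks as v grows, and
  moving the left end from u2 down to u1 keeps exactly those members of P u2 v that satisfy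
  one further condition, independent of v. Hence p u2 v - p u1 v counts the members of
  P u2 v violating that condition, which again can only decrease as v grows.\<close>

lemma card_Diff_mono_int:
  assumes "finite B" "C \<subseteq> B"
  shows "int (card C) - int (card (C \<inter> A)) \<le> int (card B) - int (card (B \<inter> A))"
proof -
  have "card (C - A) \<le> card (B - A)"
    using assms by (intro card_mono) auto
  moreover have "finite C"
    using assms finite_subset by blast
  ultimately show ?thesis
    using card_Int_Diff[OF \<open>finite B\<close>, of A] card_Int_Diff[OF \<open>finite C\<close>, of A] by linarith
qed

lemma categorical_persistence_function_card:
  fixes P :: "real \<Rightarrow> ereal \<Rightarrow> 'a set" and A :: "real \<Rightarrow> real \<Rightarrow> 'a set"
  assumes finite: "\<And>u v. ereal u < v \<Longrightarrow> finite (P u v)"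
    and antimono: "\<And>u v1 v2. ereal u < v1 \<Longrightarrow> v1 \<le> v2 \<Longrightarrow> P u v2 \<subseteq> P u v1"
    and restrict: "\<And>u1 u2 v. u1 \<le> u2 \<Longrightarrow> ereal u2 < v \<Longrightarrow> P u1 v = P u2 v \<inter> A u1 u2"
  shows "categorical_persistence_function (\<lambda>u v. int (card (P u v)))"
  unfolding categorical_persistence_function_def
proof (intro conjI allI impI exI[of _ 0])
  fix u1 u2 :: real and v1 v2 :: ereal
  assume "u1 \<le> u2 \<and> ereal u2 < v1 \<and> v1 \<le> v2"
  then have "u1 \<le> u2" "ereal u2 < v1" "ereal u2 < v2" "v1 \<le> v2"
    by auto
  note restrict1 = restrict[OF \<open>u1 \<le> u2\<close> \<open>ereal u2 < v1\<close>]
    and restrict2 = restrict[OF \<open>u1 \<le> u2\<close> \<open>ereal u2 < v2\<close>]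
    and finite1 = finite[OF \<open>ereal u2 < v1\<close>]
    and subset = antimono[OF \<open>ereal u2 < v1\<close> \<open>v1 \<le> v2\<close>]
  show "int (card (P u1 v1)) \<le> int (card (P u2 v1))"
    unfolding restrict1 using finite1 by (simp add: card_mono)
  show "int (card (P u2 v2)) \<le> int (card (P u2 v1))"
    using finite1 subset by (simp add: card_mono)
  show "int (card (P u2 v2)) - int (card (P u1 v2)) \<le> int (card (P u2 v1)) - int (card (P u1 v1))"
    unfolding restrict1 restrict2 using card_Diff_mono_int[OF finite1 subset] .
qed simp

lemma finite_elems:
  assumes "simple_graph V E"
  shows "finite (elems V E)"
proof -
  have "finite V" "E \<subseteq> Pow V"
    using assms unfolding simple_graph_def by auto
  then have "finite E"
    by (meson finite_Pow_iff finite_subset)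
  with \<open>finite V\<close> show ?thesis
    unfolding elems_def by simp
qed

lemma F_set_at_level_subset_elems:
  assumes "simple_graph V E" "F_set_at_level F V E f w X"
  shows "X \<subseteq> elems V E"
proof -
  have "sub_edges E f w \<subseteq> E" "sub_verts V E f w \<subseteq> V"
    using assms(1) unfolding sub_verts_def sub_edges_def simple_graph_def by auto
  then have "elems (sub_verts V E f w) (sub_edges E f w) \<subseteq> elems V E"
    unfolding elems_def by blast
  with assms(2) show ?thesis
    unfolding F_set_at_level_def is_F_set_def by blast
qed

lemma finite_steady_sets:
  assumes "simple_graph V E" "ereal u \<le> v"
  shows "finite (steady_sets F V E f u v)"
proof -
  have "steady_sets F V E f u v \<subseteq> Pow (elems V E)"
    using F_set_at_level_subset_elems[OF assms(1)] assms(2) unfolding steady_sets_def by blast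
  then show ?thesis
    using finite_elems[OF assms(1)] by (meson finite_Pow_iff finite_subset)
qed

lemma finite_ranging_sets:
  assumes "simple_graph V E"
  shows "finite (ranging_sets F V E f u v)"
proof -
  have "ranging_sets F V E f u v \<subseteq> Pow (elems V E)"
    using F_set_at_level_subset_elems[OF assms] unfolding ranging_sets_def by blast
  then show ?thesis
    using finite_elems[OF assms] by (meson finite_Pow_iff finite_subset)
qed

lemma steady_sets_antimono:
  assumes "v1 \<le> v2"
  shows "steady_sets F V E f u v2 \<subseteq> steady_sets F V E f u v1"
  using assms unfolding steady_sets_def by (auto intro: order_trans)

lemma ranging_sets_antimono:
  assumes "v1 \<le> v2"
  shows "ranging_sets F V E f u v2 \<subseteq> ranging_sets F V E f u v1"
  using assms unfolding ranging_sets_def by (auto intro: order_trans)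

lemma steady_sets_restrict:
  assumes "u1 \<le> u2" "ereal u2 < v"
  shows "steady_sets F V E f u1 v = steady_sets F V E f u2 v \<inter> steady_sets F V E f u1 (ereal u2)"
  using assms unfolding steady_sets_def
  by auto (meson linear order_trans ereal_less_eq(3) less_imp_le)+

lemma ranging_sets_restrict:
  assumes "u1 \<le> u2"
  shows "ranging_sets F V E f u1 v = ranging_sets F V E f u2 v
           \<inter> {X. \<exists>w. w \<noteq> -\<infinity> \<and> w \<le> ereal u1 \<and> F_set_at_level F V E f w X}"
  using assms order_trans[of _ "ereal u1" "ereal u2"] unfolding ranging_sets_def by auto

theorem proposition2:
  fixes F :: "'v feature" and V :: "'v set" and E :: "'v set set" and f :: "'v set \<Rightarrow> real"
  assumes "simple_graph V E"
  shows "categorical_persistence_function (sigma F V E f)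
       \<and> categorical_persistence_function (rho F V E f)"
proof
  show "categorical_persistence_function (sigma F V E f)"
    unfolding sigma_def
    by (rule categorical_persistence_function_card[where A = "\<lambda>u1 u2. steady_sets F V E f u1 (ereal u2)"])
      (simp_all add: assms finite_steady_sets steady_sets_antimono steady_sets_restrict)
  show "categorical_persistence_function (rho F V E f)"
    unfolding rho_def
    by (rule categorical_persistence_function_card
        [where A = "\<lambda>u1 _. {X. \<exists>w. w \<noteq> -\<infinity> \<and> w \<le> ereal u1 \<and> F_set_at_level F V E f w X}"])
      (simp_all add: assms finite_ranging_sets ranging_sets_antimono ranging_sets_restrict)
qed

end
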